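(* Let $E$ be a pseudo effect algebra satisfying (RDP) and let $d:E\to\mathbb R$ be a subadditive mapping. Assume that for every $x\in E$ the set $$D(x):=\{d(x_1)+\cdots+d(x_n):\ x=x_1+\cdots+x_n,\ x_1,\ldots,x_n\in E,\ n\ge 1\}$$ is bounded above in $\mathbb R$. Then the mapping $m:E\to\mathbb R$ given by $m(x)=\sup D(x)$ is a signed measure on $E$.
   Context: A pseudo effect algebra is a partial algebra $(E;+,0,1)$ with a partial binary operation $+$ such that for all $a,b,c\in E$: (i) $a+b$ and $(a+b)+c$ exist iff $b+c$ and $a+(b+c)$ exist, and then $(a+b)+c=a+(b+c)$; (ii) there is exactly one $d$ and exactly one $e$ with $a+d=e+a=1$; (iii) if $a+b$ exists, there are $d,e\in E$ with $a+b=d+a=b+e$; (iv) if $1+a$ or $a+1$ exists then $a=0$. The order is $a\le b$ iff $a+c=b$ for some $c$. $E$ satisfies the Riesz Decomposition Property (RDP) if whenever $a_1+a_2=b_1+b_2$ there are $d_1,d_2,d_3,d_4\in E$ with $d_1+d_2=a_1$, $d_3+d_4=a_2$, $d_1+d_3=b_1$, $d_2+d_4=b_2$. A mapping $d:E\to\mathbb R$ is subadditive if $d(0)=0$ and $d(x+y)\le d(x)+d(y)$ whenever $x+y$ is defined. A signed measure on $E$ is a map $m:E\to\mathbb R$ with $m(a+b)=m(a)+m(b)$ whenever $a+b$ is defined. *)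

theory Defs
  imports Complex_Main
begin

text \<open>A pseudo effect algebra on the whole type 'a, given by a partial binary
operation pe (None = undefined), a zero z and a unit u.\<close>

definition pseudo_effect_algebra :: "('a \<Rightarrow> 'a \<Rightarrow> 'a option) \<Rightarrow> 'a \<Rightarrow> 'a \<Rightarrow> bool" where
  "pseudo_effect_algebra pe z u \<longleftrightarrow>
     (\<forall>a b c. (\<exists>ab. pe a b = Some ab \<and> pe ab c \<noteq> None) \<longleftrightarrow>
               (\<exists>bc. pe b c = Some bc \<and> pe a bc \<noteq> None)) \<and>
     (\<forall>a b c ab bc. pe a b = Some ab \<and> pe b c = Some bc \<and> pe ab c \<noteq> None \<and> pe a bc \<noteq> None
                 \<longrightarrow> pe ab c = pe a bc) \<and>
     (\<forall>a. (\<exists>!d. pe a d = Some u) \<and> (\<exists>!e. pe e a = Some u)) \<and>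
     (\<forall>a b s. pe a b = Some s \<longrightarrow> (\<exists>d e. pe d a = Some s \<and> pe b e = Some s)) \<and>
     (\<forall>a. pe u a \<noteq> None \<or> pe a u \<noteq> None \<longrightarrow> a = z)"

definition RDP :: "('a \<Rightarrow> 'a \<Rightarrow> 'a option) \<Rightarrow> bool" where
  "RDP pe \<longleftrightarrow>
     (\<forall>a1 a2 b1 b2 s. pe a1 a2 = Some s \<and> pe b1 b2 = Some s \<longrightarrow>
        (\<exists>d1 d2 d3 d4. pe d1 d2 = Some a1 \<and> pe d3 d4 = Some a2 \<and>
                       pe d1 d3 = Some b1 \<and> pe d2 d4 = Some b2))"

text \<open>The (right-bracketed) sum x1 + (x2 + (... + xn)) of a nonempty list;
None if undefined or if the list is empty.\<close>
fun psum :: "('a \<Rightarrow> 'a \<Rightarrow> 'a option) \<Rightarrow> 'a list \<Rightarrow> 'a option" where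
  "psum pe [] = None"
| "psum pe [x] = Some x"
| "psum pe (x # y # ys) = Option.bind (psum pe (y # ys)) (\<lambda>s. pe x s)"

definition subadditive :: "('a \<Rightarrow> 'a \<Rightarrow> 'a option) \<Rightarrow> 'a \<Rightarrow> ('a \<Rightarrow> real) \<Rightarrow> bool" where
  "subadditive pe z d \<longleftrightarrow> d z = 0 \<and> (\<forall>x y s. pe x y = Some s \<longrightarrow> d s \<le> d x + d y)"

definition signed_measure :: "('a \<Rightarrow> 'a \<Rightarrow> 'a option) \<Rightarrow> ('a \<Rightarrow> real) \<Rightarrow> bool" where
  "signed_measure pe m \<longleftrightarrow> (\<forall>a b s. pe a b = Some s \<longrightarrow> m s = m a + m b)"

definition Dset :: "('a \<Rightarrow> 'a \<Rightarrow> 'a option) \<Rightarrow> ('a \<Rightarrow> real) \<Rightarrow> 'a \<Rightarrow> real set" where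
  "Dset pe d x = {sum_list (map d xs) | xs. xs \<noteq> [] \<and> psum pe xs = Some x}"

end

theory Submission
  imports Defs
begin

(* Write D(x) for the set of values
   d(x_1) + ... + d(x_n) over all decompositions x = x_1 + ... + x_n, and let
   a + b = s.  Two facts about decompositions give m(s) = m(a) + m(b):
   (1) Concatenating a decomposition of a with one of b yields a decomposition
       of s (only associativity is needed), so D(a) + D(b) \<subseteq> D(s).
   (2) Every decomposition of s can be refined, using RDP, into a decomposition
       of a and one of b; subadditivity of d shows that this refinement does not
       decrease the value, so every element of D(s) is dominated by an element
       of D(a) + D(b).
   An elementary fact about suprema of real sets then turns (1) and (2) into the
   additivity of m = Sup o D. *)

lemma pea_assoc_defined:
  assumes "pseudo_effect_algebra pe z u"
  shows "(\<exists>ab. pe a b = Some ab \<and> pe ab c \<noteq> None) \<longleftrightarrow> (\<exists>bc. pe b c = Some bc \<and> pe a bc \<noteq> None)"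
  using assms unfolding pseudo_effect_algebra_def by (elim conjE allE)

lemma pea_assoc:
  assumes "pseudo_effect_algebra pe z u"
    and "pe a b = Some ab" "pe b c = Some bc" "pe ab c \<noteq> None" "pe a bc \<noteq> None"
  shows "pe ab c = pe a bc"
  using assms unfolding pseudo_effect_algebra_def by blast

lemma psum_Cons: "ys \<noteq> [] \<Longrightarrow> psum pe (x # ys) = Option.bind (psum pe ys) (pe x)"
  by (cases ys) auto

lemma psum_append:
  assumes pea: "pseudo_effect_algebra pe z u"
    and "xs \<noteq> []" "ys \<noteq> []" "psum pe xs = Some a" "psum pe ys = Some b" "pe a b = Some s"
  shows "psum pe (xs @ ys) = Some s"
  using assms(2-)
proof (induction xs arbitrary: a s rule: list_nonempty_induct)
  case (single x)
  then show ?case by (simp add: psum_Cons)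
next
  case (cons x xs)
  from cons.prems(2) obtain w where w: "psum pe xs = Some w" "pe x w = Some a"
    using cons.hyps(1) by (cases "psum pe xs") (auto simp: psum_Cons)
  have "\<exists>xw. pe x w = Some xw \<and> pe xw b \<noteq> None" using w cons.prems(4) by auto
  then obtain wb where wb: "pe w b = Some wb" "pe x wb \<noteq> None"
    using pea_assoc_defined[OF pea, of x w b] by blast
  have "pe a b = pe x wb"
    using pea_assoc[OF pea w(2) wb(1)] wb(2) cons.prems(4) by simp
  moreover have "psum pe (xs @ ys) = Some wb"
    using cons.IH[OF cons.prems(1) w(1) cons.prems(3) wb(1)] .
  ultimately show ?case using cons.hyps(1) cons.prems(4) by (simp add: psum_Cons)
qed

text \<open>Refinement of decompositions: by RDP, a decomposition of s = a + b splits
  into decompositions of a and of b, and by subadditivity of d the value of the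
  original decomposition is at most the sum of the values of the two pieces.\<close>
lemma psum_refine:
  assumes rdp: "RDP pe" and sub: "subadditive pe z d"
    and "zs \<noteq> []" "psum pe zs = Some s" "pe a b = Some s"
  shows "\<exists>xs ys. xs \<noteq> [] \<and> ys \<noteq> [] \<and> psum pe xs = Some a \<and> psum pe ys = Some b \<and>
           sum_list (map d zs) \<le> sum_list (map d xs) + sum_list (map d ys)"
  using assms(3-)
proof (induction zs arbitrary: s a b rule: list_nonempty_induct)
  case (single x)
  then have "d x \<le> d a + d b" using sub unfolding subadditive_def by simp
  then show ?case by (intro exI[of _ "[a]"] exI[of _ "[b]"]) (use single in auto)
next
  case (cons x zs)
  from cons.prems(1) obtain w where w: "psum pe zs = Some w" "pe x w = Some s"
    using cons.hyps(1) by (cases "psum pe zs") (auto simp: psum_Cons)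
  obtain d1 d2 d3 d4 where
    D: "pe d1 d2 = Some x" "pe d3 d4 = Some w" "pe d1 d3 = Some a" "pe d2 d4 = Some b"
    using rdp w(2) cons.prems(2) unfolding RDP_def by blast
  obtain xs ys where
    IH: "xs \<noteq> []" "ys \<noteq> []" "psum pe xs = Some d3" "psum pe ys = Some d4"
        "sum_list (map d zs) \<le> sum_list (map d xs) + sum_list (map d ys)"
    using cons.IH[OF w(1) D(2)] by blast
  have "d x \<le> d d1 + d d2" using sub D(1) unfolding subadditive_def by simp
  then show ?case
    by (intro exI[of _ "d1 # xs"] exI[of _ "d2 # ys"]) (use IH D in \<open>simp add: psum_Cons\<close>)
qed

lemma Dset_iff: "t \<in> Dset pe d x \<longleftrightarrow> (\<exists>xs. xs \<noteq> [] \<and> psum pe xs = Some x \<and> t = sum_list (map d xs))"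
  unfolding Dset_def by blast

lemma Dset_nonempty: "Dset pe d x \<noteq> {}"
  using Dset_iff[of "d x" pe d x] by (auto intro!: exI[of _ "[x]"])

lemma Dset_add_mem:
  assumes "pseudo_effect_algebra pe z u" "pe a b = Some s"
    and "v \<in> Dset pe d a" "w \<in> Dset pe d b"
  shows "v + w \<in> Dset pe d s"
proof -
  obtain xs ys where "xs \<noteq> []" "psum pe xs = Some a" "v = sum_list (map d xs)"
    "ys \<noteq> []" "psum pe ys = Some b" "w = sum_list (map d ys)"
    using assms(3,4) Dset_iff by metis
  then show ?thesis
    using psum_append[OF assms(1) _ _ _ _ assms(2)] unfolding Dset_iff
    by (intro exI[of _ "xs @ ys"]) auto
qed

lemma Dset_dominated:
  assumes "RDP pe" "subadditive pe z d" "pe a b = Some s" "t \<in> Dset pe d s"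
  shows "\<exists>v\<in>Dset pe d a. \<exists>w\<in>Dset pe d b. t \<le> v + w"
proof -
  obtain zs where "zs \<noteq> []" "psum pe zs = Some s" "t = sum_list (map d zs)"
    using assms(4) Dset_iff by metis
  then obtain xs ys where "xs \<noteq> []" "ys \<noteq> []" "psum pe xs = Some a" "psum pe ys = Some b"
      "t \<le> sum_list (map d xs) + sum_list (map d ys)"
    using psum_refine[OF assms(1,2) _ _ assms(3)] by metis
  moreover have "sum_list (map d xs) \<in> Dset pe d a" "sum_list (map d ys) \<in> Dset pe d b"
    using calculation unfolding Dset_iff by blast+
  ultimately show ?thesis by blast
qed

lemma Sup_eq_Sup_add:
  fixes A B C :: "real set"
  assumes "A \<noteq> {}" "B \<noteq> {}" "bdd_above A" "bdd_above B" "bdd_above C"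
    and sum_mem: "\<And>v w. v \<in> A \<Longrightarrow> w \<in> B \<Longrightarrow> v + w \<in> C"
    and dominated: "\<And>t. t \<in> C \<Longrightarrow> \<exists>v\<in>A. \<exists>w\<in>B. t \<le> v + w"
  shows "Sup C = Sup A + Sup B"
proof (rule antisym)
  have "C \<noteq> {}" using assms(1,2) sum_mem by blast
  then show "Sup C \<le> Sup A + Sup B"
  proof (rule cSup_least)
    fix t assume "t \<in> C"
    then obtain v w where "v \<in> A" "w \<in> B" "t \<le> v + w" using dominated by blast
    then show "t \<le> Sup A + Sup B"
      using cSup_upper[OF _ assms(3), of v] cSup_upper[OF _ assms(4), of w] by linarith
  qed
next
  have "v \<le> Sup C - Sup B" if "v \<in> A" for v
  proof -
    have "Sup B \<le> Sup C - v"
    proof (rule cSup_least[OF assms(2)])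
      fix w assume "w \<in> B"
      then show "w \<le> Sup C - v" using cSup_upper[OF sum_mem[OF that \<open>w \<in> B\<close>] assms(5)] by linarith
    qed
    then show ?thesis by linarith
  qed
  then have "Sup A \<le> Sup C - Sup B" using assms(1) by (intro cSup_least) auto
  then show "Sup A + Sup B \<le> Sup C" by linarith
qed

theorem proposition3p1:
  fixes pe :: "'a \<Rightarrow> 'a \<Rightarrow> 'a option" and z u :: 'a and d :: "'a \<Rightarrow> real"
  assumes "pseudo_effect_algebra pe z u"
    and "RDP pe"
    and "subadditive pe z d"
    and "\<forall>x. bdd_above (Dset pe d x)"
  shows "signed_measure pe (\<lambda>x. Sup (Dset pe d x))"
  unfolding signed_measure_def
proof (intro allI impI)
  fix a b s assume sum: "pe a b = Some s"
  show "Sup (Dset pe d s) = Sup (Dset pe d a) + Sup (Dset pe d b)"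
  proof (rule Sup_eq_Sup_add)
    show "Dset pe d a \<noteq> {}" "Dset pe d b \<noteq> {}" by (fact Dset_nonempty)+
    show "bdd_above (Dset pe d a)" "bdd_above (Dset pe d b)" "bdd_above (Dset pe d s)"
      using assms(4) by simp_all
    show "\<And>v w. v \<in> Dset pe d a \<Longrightarrow> w \<in> Dset pe d b \<Longrightarrow> v + w \<in> Dset pe d s"
      using Dset_add_mem[OF assms(1) sum] .
    show "\<And>t. t \<in> Dset pe d s \<Longrightarrow> \<exists>v\<in>Dset pe d a. \<exists>w\<in>Dset pe d b. t \<le> v + w"
      using Dset_dominated[OF assms(2,3) sum] .
  qed
qed

end
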